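(* Let $g$ be a positive integer; suppose that for some $l$ the set $S_l$ contains a consecutive prospective prime pair with gap $g$, and let $j>l+2$. Let $(a,a+g)$ be a consecutive prospective prime pair with gap $g$ in $S_j$, and let $B$ be the set of $m_{j+1}\in\{0,\dots,P_{j+1}-1\}$ such that $b=a+m_{j+1}P_j\#$ and $b+g$ are both coprime to $P_{j+1}\#$. For $m_{j+1}\in B$ with $b=a+m_{j+1}P_j\#$, let $\widehat m(m_{j+1})$ be the unique $\widehat m\in\{0,\dots,P_{j+2}-1\}$ with $P_{j+2}\mid b+\widehat mP_{j+1}\#$, and $\widehat m'(m_{j+1})$ the unique $\widehat m'\in\{0,\dots,P_{j+2}-1\}$ with $P_{j+2}\mid b+g+\widehat m'P_{j+1}\#$ (these index the subsets $S_{j+2}^{(\widehat m)}$, $S_{j+2}^{(\widehat m')}$ of $S_{j+2}$ in which the corresponding lesser, resp. greater, component is disallowed). Then the map $m_{j+1}\mapsto\widehat m(m_{j+1})$ is injective on $B$, and the map $m_{j+1}\mapsto\widehat m'(m_{j+1})$ is injective on $B$.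
   Context: $P_k$ denotes the $k$-th prime ($P_1=2$), $P_k\#=\prod_{i=1}^kP_i$. $S_k=\{N\in\mathbb{N}:5\le N\le4+P_k\#\}$ and $S_k^{(m)}=\{N:5+mP_{k-1}\#\le N\le 4+(m+1)P_{k-1}\#\}$ for $0\le m\le P_k-1$. A prospective prime in $S_k$ is an $N\in S_k$ coprime to $P_k\#$; prospective primes $a<b$ in $S_k$ are consecutive if no integer strictly between them is coprime to $P_k\#$; a consecutive prospective prime pair with gap $g$ is a pair $(a,a+g)$ of consecutive prospective primes. *)

theory Defs
  imports "HOL-Computational_Algebra.Primes" "HOL-Library.Infinite_Set"
begin

(* P k = k-th prime, with P 1 = 2 (enumerate is 0-indexed) *)
definition P :: "nat \<Rightarrow> nat" where
  "P k = enumerate {p. prime p} (k - 1)"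

definition primorial :: "nat \<Rightarrow> nat" where
  "primorial k = (\<Prod>i\<in>{1..k}. P i)"

definition S :: "nat \<Rightarrow> nat set" where
  "S k = {5 .. 4 + primorial k}"

definition prospective :: "nat \<Rightarrow> nat \<Rightarrow> bool" where
  "prospective k N \<longleftrightarrow> N \<in> S k \<and> coprime N (primorial k)"

definition consecutive :: "nat \<Rightarrow> nat \<Rightarrow> nat \<Rightarrow> bool" where
  "consecutive k a b \<longleftrightarrow> prospective k a \<and> prospective k b \<and> a < b \<and>
     (\<forall>n. a < n \<and> n < b \<longrightarrow> \<not> coprime n (primorial k))"

definition cpp_gap :: "nat \<Rightarrow> nat \<Rightarrow> nat \<Rightarrow> bool" where
  "cpp_gap k g a \<longleftrightarrow> consecutive k a (a + g)"

definition Bset :: "nat \<Rightarrow> nat \<Rightarrow> nat \<Rightarrow> nat set" where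
  "Bset j g a = {m. m < P (j+1) \<and> coprime (a + m * primorial j) (primorial (j+1))
                 \<and> coprime (a + m * primorial j + g) (primorial (j+1))}"

definition mhat :: "nat \<Rightarrow> nat \<Rightarrow> nat \<Rightarrow> nat" where
  "mhat j a m = (THE mh. mh < P (j+2) \<and> P (j+2) dvd (a + m * primorial j + mh * primorial (j+1)))"

definition mhat' :: "nat \<Rightarrow> nat \<Rightarrow> nat \<Rightarrow> nat \<Rightarrow> nat" where
  "mhat' j g a m = (THE mh. mh < P (j+2) \<and> P (j+2) dvd (a + m * primorial j + g + mh * primorial (j+1)))"

end

theory Submission
  imports Defs "HOL-Number_Theory.Cong"
begin

(* Since P_{j+2} is a prime not dividing P_{j+1}#, for each m the congruence
   a + m P_j# + x P_{j+1}# = 0 (mod P_{j+2}) has exactly one solution x < P_{j+2}.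
   If m and m' give the same x, subtracting yields m P_j# = m' P_j# (mod P_{j+2}),
   so m = m' (mod P_{j+2}); as m, m' < P_{j+1} < P_{j+2}, they are equal. *)

lemma prime_P: "prime (P k)"
  unfolding P_def using enumerate_in_set[OF primes_infinite] by simp

lemma P_less_P: "1 \<le> i \<Longrightarrow> i < k \<Longrightarrow> P i < P k"
  unfolding P_def
  by (intro strict_monoD[OF strict_mono_enumerate]) (auto simp: primes_infinite)

lemma coprime_primorial_P: "k < n \<Longrightarrow> coprime (primorial k) (P n)"
  unfolding primorial_def
proof (rule prod_coprime_left)
  fix i assume "k < n" "i \<in> {1..k}"
  then have "P i \<noteq> P n" using P_less_P[of i n] by auto
  then show "coprime (P i) (P n)" by (simp add: primes_coprime prime_P)
qed

lemma inj_on_add_mult_mod: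
  fixes c R q :: nat
  assumes "coprime R q"
  shows "inj_on (\<lambda>x. (c + x * R) mod q) {..<q}"
proof
  fix u v assume "u \<in> {..<q}" "v \<in> {..<q}" "(c + u * R) mod q = (c + v * R) mod q"
  then have "[u * R = v * R] (mod q)" and "u < q" "v < q"
    by (simp_all add: cong_def[symmetric] cong_add_lcancel_nat)
  then show "u = v"
    using assms by (simp add: cong_mult_rcancel_nat cong_less_modulus_unique_nat)
qed

lemma ex1_less_dvd_add_mult:
  fixes c R q :: nat
  assumes "coprime R q" and "q > 0"
  shows "\<exists>!x. x < q \<and> q dvd c + x * R"
proof -
  let ?f = "\<lambda>x. (c + x * R) mod q"
  have inj: "inj_on ?f {..<q}" using assms(1) by (rule inj_on_add_mult_mod)
  moreover have "?f ` {..<q} \<subseteq> {..<q}" using \<open>q > 0\<close> by auto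
  ultimately have "?f ` {..<q} = {..<q}" by (intro endo_inj_surj) simp_all
  then have "0 \<in> ?f ` {..<q}" using \<open>q > 0\<close> by simp
  then obtain x where x: "x < q" "?f x = 0" by auto
  show ?thesis
  proof (rule ex1I)
    show "x < q \<and> q dvd c + x * R" using x by (simp add: dvd_eq_mod_eq_0)
  next
    fix y assume "y < q \<and> q dvd c + y * R"
    then have "?f y = ?f x" "y \<in> {..<q}" "x \<in> {..<q}"
      using x by (simp_all add: dvd_eq_mod_eq_0)
    then show "y = x" using inj by (blast dest: inj_onD)
  qed
qed

lemma inj_on_THE_less_dvd:
  fixes c Q R q :: nat
  assumes "coprime Q q" "coprime R q" "q > 0" "B \<subseteq> {..<q}"
  shows "inj_on (\<lambda>m. THE x. x < q \<and> q dvd c + m * Q + x * R) B"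
proof
  let ?h = "\<lambda>m. THE x. x < q \<and> q dvd c + m * Q + x * R"
  fix m m' assume "m \<in> B" "m' \<in> B" and same: "?h m = ?h m'"
  have sol: "q dvd c + k * Q + ?h k * R" for k
    using theI'[OF ex1_less_dvd_add_mult[OF assms(2,3)]] by blast
  have "q dvd (c + ?h m * R) + k * Q" if "?h k = ?h m" for k
    using sol[of k] that by (simp add: add_ac)
  then have "q dvd (c + ?h m * R) + m * Q" "q dvd (c + ?h m * R) + m' * Q"
    using same by simp_all
  moreover have "m < q" "m' < q" using \<open>m \<in> B\<close> \<open>m' \<in> B\<close> assms(4) by auto
  ultimately show "m = m'"
    using ex1_less_dvd_add_mult[OF assms(1,3), of "c + ?h m * R"] by blast
qed

theorem lemma3:
  fixes g l j a :: nat
  assumes "g > 0"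
    and "\<exists>a0. cpp_gap l g a0"
    and "j > l + 2"
    and "cpp_gap j g a"
  shows "inj_on (mhat j a) (Bset j g a) \<and> inj_on (mhat' j g a) (Bset j g a)"
proof -
  let ?q = "P (j+2)"
  have "?q > 0" by (simp add: prime_P prime_gt_0_nat)
  have cop: "coprime (primorial j) ?q" "coprime (primorial (j+1)) ?q"
    by (simp_all add: coprime_primorial_P)
  have "Bset j g a \<subseteq> {..<?q}"
    using P_less_P[of "j+1" "j+2"] by (auto simp: Bset_def)
  note inj = inj_on_THE_less_dvd[OF cop \<open>?q > 0\<close> this]
  have "mhat j a = (\<lambda>m. THE x. x < ?q \<and> ?q dvd a + m * primorial j + x * primorial (j+1))"
    by (simp add: fun_eq_iff mhat_def)
  moreover have "mhat' j g a =
      (\<lambda>m. THE x. x < ?q \<and> ?q dvd (a + g) + m * primorial j + x * primorial (j+1))"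
    by (simp add: fun_eq_iff mhat'_def add_ac)
  ultimately show ?thesis using inj by simp
qed

end
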